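(* Let $k\ge 1$ and $n\ge 2k$. Then \[ l_k(n)=\binom{n-1}{\lceil k/2\rceil-1}+\binom{n-1}{\lfloor k/2\rfloor-1}. \] Equivalently, for $k\ge1$: $l_{2k}(n)=2\binom{n-1}{k-1}$ whenever $n\ge 4k$, and $l_{2k+1}(n)=\binom{n}{k}$ whenever $n\ge 4k+2$. In particular, for $n\ge 2k$, $l_k(n)$ is a polynomial in $n$ of degree $\lceil (k-2)/2\rceil$.
   Context: For a positive integer $m$, $P_m$ denotes the path with vertex set $[m]=\{1,\dots,m\}$ in which $i$ and $j$ are adjacent iff $|i-j|=1$. An endomorphism of $P_n$ is a map $f:[n]\to[n]$ with $|f(i)-f(i+1)|=1$ for all $1\le i\le n-1$. Every endomorphism $f$ induces a partition of $[n]$ whose blocks are the nonempty fibers $f^{-1}(y)$. Let $\mathscr C(P_n)$ be the set of partitions of $[n]$ induced by endomorphisms of $P_n$, and for $1\le k\le n-1$ let $l_k(n)=|\{\rho\in\mathscr C(P_n): \rho \text{ has exactly } n-k+1 \text{ blocks}\}|$. Convention: $\binom{a}{b}=0$ if $b<0$ or $b>a$. *)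

theory Defs
  imports Complex_Main
begin

text \<open>Endomorphisms of the path P_n on vertex set [n] = {1..n}. Maps are represented
  as functions nat => nat; only their values on {1..n} matter.\<close>
definition path_endo :: "nat \<Rightarrow> (nat \<Rightarrow> nat) \<Rightarrow> bool" where
  "path_endo n f \<longleftrightarrow> (\<forall>i\<in>{1..n}. f i \<in> {1..n}) \<and>
     (\<forall>i. 1 \<le> i \<and> i \<le> n - 1 \<longrightarrow> \<bar>int (f i) - int (f (i + 1))\<bar> = 1)"

definition induced_partition :: "nat \<Rightarrow> (nat \<Rightarrow> nat) \<Rightarrow> nat set set" where
  "induced_partition n f = {{i \<in> {1..n}. f i = y} | y. y \<in> f ` {1..n}}"

definition C_path :: "nat \<Rightarrow> nat set set set" where
  "C_path n = {induced_partition n f | f. path_endo n f}"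

definition l_count :: "nat \<Rightarrow> nat \<Rightarrow> nat" where
  "l_count k n = card {\<rho> \<in> C_path n. card \<rho> = n - k + 1}"

text \<open>Binomial coefficient with integer lower index; 0 if b < 0 (and 0 if b > a).\<close>
definition zbinom :: "nat \<Rightarrow> int \<Rightarrow> nat" where
  "zbinom a b = (if b < 0 then 0 else a choose nat b)"

end

theory Submission
  imports Defs
begin

(* Record an endomorphism f of P_n by its list of values [f 1, ..., f n]: a walk on the
   naturals with steps +1/-1.  The induced partition depends only on the equality pattern
   of this list, and a walk taking M+1 distinct values visits exactly an interval of M+1
   consecutive numbers.  Shifting the walk into {0..M} and, if necessary, reflecting it by
   x |-> M - x so that its first step goes up yields a canonical representative.  Hence
   the partitions with M+1 blocks correspond bijectively to the "upward spanning walks":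
   walks of length n with value set exactly {0..M} starting with an up-step, and these are
   exactly half of all spanning walks.

   Spanning walks are counted by inclusion-exclusion from walks confined to {0..R} for
   R = M, M-1, M-2; confined walks are counted by the reflection principle in terms of
   hit_count m h, the number of step sequences of length m that lead from height h down
   to height 0.  When n-1 < 2M at most one reflection at each wall matters, and the
   inclusion-exclusion collapses to 2 (hit_count (n-1) M - hit_count (n-1) (M+2)).
   Finally each difference hit_count m h - hit_count m (h+1) is a single binomial
   coefficient; with M = n - k this is the claimed formula. *)

section \<open>Hitting counts\<close>

text \<open>\<open>hit_count m h\<close> counts the step sequences of length \<open>m\<close> whose walk, started at
  height \<open>h\<close>, reaches height \<open>0\<close> (once it has, all remaining steps are free).\<close>
fun hit_count :: "nat \<Rightarrow> int \<Rightarrow> int" where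
  "hit_count 0 h = (if h \<le> 0 then 1 else 0)"
| "hit_count (Suc m) h =
     (if h \<le> 0 then 2 ^ Suc m else hit_count m (h - 1) + hit_count m (h + 1))"

lemma hit_count_nonpos: "h \<le> 0 \<Longrightarrow> hit_count m h = 2 ^ m"
  by (cases m) auto

text \<open>A walk of \<open>m\<close> steps cannot descend by more than \<open>m\<close>.\<close>
lemma hit_count_unreachable: "int m < h \<Longrightarrow> hit_count m h = 0"
  by (induction m arbitrary: h) auto

lemma choose_middle_Suc:
  assumes "0 < m"
  shows "Suc m choose (Suc m div 2) = (m choose (m div 2)) + (m choose ((m - 1) div 2))"
proof (cases "even m")
  case True
  then obtain a where m: "m = 2 * a" "0 < a" using assms by auto
  then show ?thesis using binomial_Suc_Suc[of m "a - 1"] by (cases a) simp_all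
next
  case False
  then obtain a where m: "m = 2 * a + 1" by (metis oddE)
  have "m choose (a + 1) = m choose a" using binomial_symmetric[of "a + 1" m] m by simp
  then show ?thesis using m by simp
qed

text \<open>The walks counted by \<open>hit_count m h\<close> but not by \<open>hit_count m (h + 1)\<close> are those
  whose minimum is exactly \<open>0\<close>; there are \<open>m choose ((m - h) div 2)\<close> of them.\<close>
lemma hit_count_diff:
  "0 \<le> h \<Longrightarrow> hit_count m h - hit_count m (h + 1) =
     (if h \<le> int m then int (m choose nat ((int m - h) div 2)) else 0)"
proof (induction m arbitrary: h)
  case 0
  then show ?case by auto
next
  case (Suc m)
  show ?case
  proof (cases "h = 0")
    case True
    have "hit_count (Suc m) 0 - hit_count (Suc m) 1
        = (hit_count m 0 - hit_count m 1) + (hit_count m 1 - hit_count m 2)"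
      by (simp add: hit_count_nonpos)
    moreover have "nat ((1 + int m) div 2) = Suc m div 2" by (simp add: nat_div_distrib)
    ultimately show ?thesis using Suc.IH[of 0] Suc.IH[of 1] choose_middle_Suc[of m] True
      by (cases "m = 0") (simp_all add: nat_div_distrib nat_diff_distrib)
  next
    case False
    with Suc.prems have h1: "1 \<le> h" by simp
    have split: "hit_count (Suc m) h - hit_count (Suc m) (h + 1)
        = (hit_count m (h - 1) - hit_count m h) + (hit_count m (h + 1) - hit_count m (h + 2))"
      using h1 by (simp add: add.commute)
    have lower: "hit_count m (h - 1) - hit_count m h =
        (if h - 1 \<le> int m then int (m choose nat ((int m - (h - 1)) div 2)) else 0)"
      using Suc.IH[of "h - 1"] h1 by simp
    have upper: "hit_count m (h + 1) - hit_count m (h + 2) =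
        (if h + 1 \<le> int m then int (m choose nat ((int m - (h + 1)) div 2)) else 0)"
      using Suc.IH[of "h + 1"] h1 by (simp add: add.assoc)
    show ?thesis
    proof (cases "h \<le> int m + 1")
      case False
      then show ?thesis using split lower upper by simp
    next
      case h_le: True
      define t where "t = nat ((int (Suc m) - h) div 2)"
      have t_lower: "nat ((int m - (h - 1)) div 2) = t" unfolding t_def by simp
      have t_Suc: "nat ((1 + int m - h) div 2) = t" unfolding t_def by simp
      show ?thesis
      proof (cases "h + 1 \<le> int m")
        case True
        then have "0 < t" "nat ((int m - (h + 1)) div 2) = t - 1"
          unfolding t_def by (simp_all add: nat_diff_distrib)
        then show ?thesis
          using split lower upper True t_lower t_Suc binomial_Suc_Suc[of m "t - 1"] h1
          by (simp add: t_def[symmetric])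
      next
        case False
        then have "t = 0" unfolding t_def using h_le by simp
        then show ?thesis
          using split lower upper False h_le t_lower t_Suc h1 by (simp add: t_def[symmetric])
      qed
    qed
  qed
qed

section \<open>Walks from a fixed start confined to an interval\<close>

abbreviation adjacent :: "nat \<Rightarrow> nat \<Rightarrow> bool" where
  "adjacent a b \<equiv> b = Suc a \<or> a = Suc b"

lemma walk_map:
  assumes "successively adjacent xs"
    and "\<And>a b. a \<in> set xs \<Longrightarrow> b \<in> set xs \<Longrightarrow> b = Suc a \<Longrightarrow> adjacent (g a) (g b)"
  shows "successively adjacent (map g xs)"
  unfolding successively_map using assms(1)
  by (rule successively_mono) (use assms(2) in blast)

definition walks_from :: "nat \<Rightarrow> nat \<Rightarrow> nat \<Rightarrow> nat list set" where
  "walks_from R s m =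
     {xs. length xs = Suc m \<and> hd xs = s \<and> successively adjacent xs \<and> set xs \<subseteq> {..R}}"

lemma finite_walks_from: "finite (walks_from R s m)"
proof (rule finite_subset)
  show "walks_from R s m \<subseteq> {xs. set xs \<subseteq> {..R} \<and> length xs = Suc m}"
    unfolding walks_from_def by auto
qed (simp add: finite_lists_length_eq)

definition neighbours :: "nat \<Rightarrow> nat \<Rightarrow> nat set" where
  "neighbours R s = {t. t \<le> R \<and> adjacent s t}"

lemma walks_from_Suc:
  assumes "s \<le> R"
  shows "walks_from R s (Suc m) = Cons s ` (\<Union>t\<in>neighbours R s. walks_from R t m)"
proof (intro equalityI subsetI)
  fix xs assume xs: "xs \<in> walks_from R s (Suc m)"
  then obtain y zs where xs_eq: "xs = s # y # zs"
    unfolding walks_from_def by (auto simp: length_Suc_conv)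
  with xs have "y # zs \<in> walks_from R y m" "y \<in> neighbours R s"
    unfolding walks_from_def neighbours_def by auto
  then show "xs \<in> Cons s ` (\<Union>t\<in>neighbours R s. walks_from R t m)" using xs_eq by blast
next
  fix xs assume "xs \<in> Cons s ` (\<Union>t\<in>neighbours R s. walks_from R t m)"
  then obtain t zs where "xs = s # t # zs" "t \<in> neighbours R s" "t # zs \<in> walks_from R t m"
    unfolding walks_from_def by (auto simp: length_Suc_conv)
  then show "xs \<in> walks_from R s (Suc m)"
    using assms unfolding walks_from_def neighbours_def by auto
qed

lemma card_walks_from_Suc:
  assumes "s \<le> R"
  shows "card (walks_from R s (Suc m)) = (\<Sum>t\<in>neighbours R s. card (walks_from R t m))"
proof -
  have "card (walks_from R s (Suc m)) = card (\<Union>t\<in>neighbours R s. walks_from R t m)"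
    unfolding walks_from_Suc[OF assms] by (rule card_image) simp
  also have "\<dots> = (\<Sum>t\<in>neighbours R s. card (walks_from R t m))"
  proof (rule card_UN_disjoint)
    show "finite (neighbours R s)" unfolding neighbours_def by auto
    show "\<forall>t\<in>neighbours R s. finite (walks_from R t m)" using finite_walks_from by blast
    show "\<forall>t\<in>neighbours R s. \<forall>t'\<in>neighbours R s. t \<noteq> t' \<longrightarrow>
        walks_from R t m \<inter> walks_from R t' m = {}"
      unfolding walks_from_def by auto
  qed
  finally show ?thesis .
qed

text \<open>Reflection principle: the walks of \<open>m\<close> steps from \<open>s\<close> confined to \<open>{0..R}\<close> are all
  walks, minus those reaching \<open>-1\<close> or \<open>R + 1\<close>, plus those reaching one wall and then
  the other.  For \<open>m \<le> 2 R + 3\<close> no walk can alternate three times.\<close>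
definition confined_count :: "nat \<Rightarrow> int \<Rightarrow> int \<Rightarrow> int" where
  "confined_count m R s = 2 ^ m - hit_count m (s + 1) - hit_count m (R + 1 - s)
     + hit_count m (R + 3 + s) + hit_count m (2 * R + 3 - s)"

lemma confined_count_walls:
  assumes "int m < 2 * R + 4"
  shows "confined_count m R (-1) = 0" "confined_count m R (R + 1) = 0"
  unfolding confined_count_def
  using hit_count_unreachable[of m "2 * R + 4"] assms hit_count_nonpos[of 0 m]
  by (simp_all add: algebra_simps)

lemma confined_count_step:
  assumes "0 \<le> s" "s \<le> R"
  shows "confined_count (Suc m) R s = confined_count m R (s - 1) + confined_count m R (s + 1)"
  using assms unfolding confined_count_def
  by (simp add: algebra_simps)

theorem card_walks_from:
  assumes "int m \<le> 2 * int R + 3" "s \<le> R"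
  shows "int (card (walks_from R s m)) = confined_count m (int R) (int s)"
  using assms
proof (induction m arbitrary: s)
  case 0
  then have "walks_from R s 0 = {[s]}" unfolding walks_from_def by (auto simp: length_Suc_conv)
  with 0 show ?case
    by (simp add: confined_count_def hit_count_unreachable)
next
  case (Suc m)
  have m_bound: "int m < 2 * int R + 4" using Suc.prems by simp
  have neighbours: "neighbours R s =
      (if 1 \<le> s then {s - 1} else {}) \<union> (if s + 1 \<le> R then {s + 1} else {})"
    using Suc.prems unfolding neighbours_def by auto
  have below: "int (if 1 \<le> s then card (walks_from R (s - 1) m) else 0)
      = confined_count m (int R) (int s - 1)"
  proof (cases "s = 0")
    case True
    then show ?thesis using confined_count_walls(1)[OF m_bound] by simp
  qed (use Suc.IH[of "s - 1"] Suc.prems in \<open>simp add: of_nat_diff\<close>)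
  have above: "int (if s + 1 \<le> R then card (walks_from R (s + 1) m) else 0)
      = confined_count m (int R) (int s + 1)"
  proof (cases "s = R")
    case True
    then show ?thesis using confined_count_walls(2)[OF m_bound] by simp
  qed (use Suc.IH[of "s + 1"] Suc.prems in \<open>simp add: add.commute\<close>)
  have "card (walks_from R s (Suc m))
      = (if 1 \<le> s then card (walks_from R (s - 1) m) else 0)
        + (if s + 1 \<le> R then card (walks_from R (s + 1) m) else 0)"
    unfolding card_walks_from_Suc[OF Suc.prems(2)] neighbours by auto
  then have "int (card (walks_from R s (Suc m)))
      = confined_count m (int R) (int s - 1) + confined_count m (int R) (int s + 1)"
    using below above by simp
  also have "\<dots> = confined_count (Suc m) (int R) (int s)"
    using confined_count_step[of "int s" "int R" m] Suc.prems by simp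
  finally show ?case .
qed

section \<open>Walks of given length confined to an interval\<close>

text \<open>Tail sums of \<open>hit_count\<close>; they telescope the sums of \<open>confined_count\<close> over all
  starting points (\<open>sum_confined_count\<close>).\<close>
definition hit_tail :: "nat \<Rightarrow> int \<Rightarrow> int" where
  "hit_tail m h = (\<Sum>j<Suc m. hit_count m (h + int j))"

lemma hit_tail_unreachable: "int m < h \<Longrightarrow> hit_tail m h = 0"
  unfolding hit_tail_def by (rule sum.neutral) (auto intro!: hit_count_unreachable)

lemma hit_tail_step:
  assumes h: "1 \<le> h"
  shows "hit_tail m h = hit_count m h + hit_tail m (h + 1)"
proof -
  have "hit_tail m h = hit_count m h + (\<Sum>j<m. hit_count m (h + 1 + int j))"
    unfolding hit_tail_def by (subst sum.lessThan_Suc_shift) (simp add: algebra_simps)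
  moreover have "hit_tail m (h + 1) = (\<Sum>j<m. hit_count m (h + 1 + int j))"
    unfolding hit_tail_def using h by (simp add: hit_count_unreachable)
  ultimately show ?thesis by simp
qed

lemma sum_hit_count:
  "1 \<le> h \<Longrightarrow> (\<Sum>s<N. hit_count m (h + int s)) = hit_tail m h - hit_tail m (h + int N)"
proof (induction N)
  case (Suc N)
  then show ?case using hit_tail_step[of "h + int N" m] by (simp add: algebra_simps)
qed simp

text \<open>Closed form for the number of walks of \<open>m\<close> steps confined to \<open>{0..R}\<close>.\<close>
definition confined_total :: "nat \<Rightarrow> int \<Rightarrow> int" where
  "confined_total m R = (R + 1) * 2 ^ m - 2 * (hit_tail m 1 - hit_tail m (R + 2))
     + 2 * (hit_tail m (R + 3) - hit_tail m (2 * R + 4))"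

lemma sum_confined_count:
  "(\<Sum>s\<le>R. confined_count m (int R) (int s)) = confined_total m (int R)"
proof -
  have up: "(\<Sum>s\<le>R. hit_count m (int s + 1)) = hit_tail m 1 - hit_tail m (int R + 2)"
    using sum_hit_count[of 1 m "Suc R"] by (simp add: lessThan_Suc_atMost add.commute)
  have down: "(\<Sum>s\<le>R. hit_count m (int R + 1 - int s)) = hit_tail m 1 - hit_tail m (int R + 2)"
    using sum.atLeastAtMost_rev[of "\<lambda>s. hit_count m (int s + 1)" 0 R] up
    by (simp add: atLeast0AtMost of_nat_diff algebra_simps)
  have up': "(\<Sum>s\<le>R. hit_count m (int R + 3 + int s))
      = hit_tail m (int R + 3) - hit_tail m (2 * int R + 4)"
    using sum_hit_count[of "int R + 3" m "Suc R"] by (simp add: lessThan_Suc_atMost algebra_simps)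
  have down': "(\<Sum>s\<le>R. hit_count m (2 * int R + 3 - int s))
      = hit_tail m (int R + 3) - hit_tail m (2 * int R + 4)"
    using sum.atLeastAtMost_rev[of "\<lambda>s. hit_count m (int R + 3 + int s)" 0 R] up'
    by (simp add: atLeast0AtMost of_nat_diff algebra_simps)
  have "(\<Sum>s\<le>R. confined_count m (int R) (int s))
      = (\<Sum>s\<le>R. 2 ^ m) - (\<Sum>s\<le>R. hit_count m (int s + 1))
        - (\<Sum>s\<le>R. hit_count m (int R + 1 - int s))
        + (\<Sum>s\<le>R. hit_count m (int R + 3 + int s))
        + (\<Sum>s\<le>R. hit_count m (2 * int R + 3 - int s))"
    unfolding confined_count_def by (simp add: sum.distrib sum_subtractf)
  also have "\<dots> = confined_total m (int R)"
    unfolding up down up' down' confined_total_def by simp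
  finally show ?thesis .
qed

text \<open>The second difference of \<open>confined_total\<close> in the width, which is what the
  inclusion-exclusion for spanning walks produces.\<close>
lemma confined_total_second_diff:
  assumes "1 \<le> M" "int m < 2 * M"
  shows "confined_total m M - 2 * confined_total m (M - 1) + confined_total m (M - 2)
       = 2 * (hit_count m M - hit_count m (M + 2))"
proof -
  have "hit_tail m M = hit_count m M + hit_tail m (M + 1)"
    "hit_tail m (M + 1) = hit_count m (M + 1) + hit_tail m (M + 2)"
    "hit_tail m (M + 2) = hit_count m (M + 2) + hit_tail m (M + 3)"
    using assms hit_tail_step[of M m] hit_tail_step[of "M + 1" m] hit_tail_step[of "M + 2" m]
    by (simp_all add: add.assoc)
  moreover have "hit_tail m (2 * M + 4) = 0" "hit_tail m (2 * (M - 1) + 4) = 0"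
    "hit_tail m (2 * (M - 2) + 4) = 0"
    using assms by (auto intro!: hit_tail_unreachable)
  ultimately show ?thesis unfolding confined_total_def by (simp add: algebra_simps)
qed

definition bounded_walks :: "nat \<Rightarrow> nat \<Rightarrow> nat list set" where
  "bounded_walks R n = {xs. length xs = n \<and> successively adjacent xs \<and> set xs \<subseteq> {..R}}"

lemma finite_bounded_walks: "finite (bounded_walks R n)"
proof (rule finite_subset)
  show "bounded_walks R n \<subseteq> {xs. set xs \<subseteq> {..R} \<and> length xs = n}"
    unfolding bounded_walks_def by auto
qed (simp add: finite_lists_length_eq)

theorem card_bounded_walks:
  assumes "int m \<le> 2 * int R + 3"
  shows "int (card (bounded_walks R (Suc m))) = confined_total m (int R)"
proof -
  have "bounded_walks R (Suc m) = (\<Union>s\<le>R. walks_from R s m)"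
    unfolding bounded_walks_def walks_from_def by (auto simp: length_Suc_conv)
  also have "card \<dots> = (\<Sum>s\<le>R. card (walks_from R s m))"
  proof (rule card_UN_disjoint)
    show "\<forall>s\<in>{..R}. finite (walks_from R s m)" using finite_walks_from by blast
    show "\<forall>s\<in>{..R}. \<forall>t\<in>{..R}. s \<noteq> t \<longrightarrow> walks_from R s m \<inter> walks_from R t m = {}"
      unfolding walks_from_def by auto
  qed simp
  finally have "int (card (bounded_walks R (Suc m))) = (\<Sum>s\<le>R. confined_count m (int R) (int s))"
    using card_walks_from[OF assms] by simp
  then show ?thesis using sum_confined_count by simp
qed

section \<open>Spanning walks\<close>

text \<open>Walks of length \<open>n\<close> whose set of values is exactly \<open>{0..M}\<close> (see
  \<open>spanning_walk_values\<close>).\<close>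
definition spanning_walks :: "nat \<Rightarrow> nat \<Rightarrow> nat list set" where
  "spanning_walks M n = {xs \<in> bounded_walks M n. 0 \<in> set xs \<and> M \<in> set xs}"

lemma bounded_walks_avoiding_top:
  "1 \<le> M \<Longrightarrow> {xs \<in> bounded_walks M n. M \<notin> set xs} = bounded_walks (M - 1) n"
  unfolding bounded_walks_def by (auto simp: subset_iff le_diff_conv2 le_less)

lemma bounded_walks_avoiding_bottom:
  assumes "1 \<le> M"
  shows "{xs \<in> bounded_walks M n. 0 \<notin> set xs} = map Suc ` bounded_walks (M - 1) n"
proof (intro equalityI subsetI)
  fix xs assume xs: "xs \<in> {xs \<in> bounded_walks M n. 0 \<notin> set xs}"
  then have "0 \<notin> set xs" by simp
  then have "xs = map Suc (map (\<lambda>x. x - 1) xs)" by (induction xs) auto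
  moreover have "map (\<lambda>x. x - 1) xs \<in> bounded_walks (M - 1) n"
    using xs unfolding bounded_walks_def by (auto intro!: walk_map) (metis Suc_pred gr0I)
  ultimately show "xs \<in> map Suc ` bounded_walks (M - 1) n" by blast
next
  fix xs assume "xs \<in> map Suc ` bounded_walks (M - 1) n"
  then show "xs \<in> {xs \<in> bounded_walks M n. 0 \<notin> set xs}"
    using assms unfolding bounded_walks_def by (fastforce intro!: walk_map simp: subset_iff)
qed

text \<open>Inclusion-exclusion over the two conditions "visits 0" and "visits M", with the
  confined walks counted by \<open>card_bounded_walks\<close>.\<close>
theorem card_spanning_walks:
  assumes M: "1 \<le> M" and m: "int m < 2 * int M"
  shows "int (card (spanning_walks M (Suc m))) = 2 * (hit_count m (int M) - hit_count m (int M + 2))"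
proof -
  define W where "W = bounded_walks M (Suc m)"
  define Z0 where "Z0 = {xs \<in> W. 0 \<notin> set xs}"
  define ZM where "ZM = {xs \<in> W. M \<notin> set xs}"
  have finite: "finite W" "finite Z0" "finite ZM"
    unfolding Z0_def ZM_def W_def using finite_bounded_walks by auto
  have "W = spanning_walks M (Suc m) \<union> (Z0 \<union> ZM)"
    "spanning_walks M (Suc m) \<inter> (Z0 \<union> ZM) = {}"
    unfolding spanning_walks_def Z0_def ZM_def W_def by auto
  then have "card W + card (Z0 \<inter> ZM) = card (spanning_walks M (Suc m)) + card Z0 + card ZM"
    using card_Un_disjoint[of "spanning_walks M (Suc m)" "Z0 \<union> ZM"] card_Un_Int[of Z0 ZM] finite
    by (simp add: finite_subset[OF _ finite(1)])
  moreover have "card Z0 = card (bounded_walks (M - 1) (Suc m))"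
    unfolding Z0_def W_def bounded_walks_avoiding_bottom[OF M]
    by (rule card_image) (simp add: inj_on_def)
  moreover have "card ZM = card (bounded_walks (M - 1) (Suc m))"
    unfolding ZM_def W_def bounded_walks_avoiding_top[OF M] ..
  moreover have "int (card (Z0 \<inter> ZM)) = confined_total m (int M - 2)"
  proof (cases "M = 1")
    case True
    then have "Z0 \<inter> ZM = {}"
      unfolding Z0_def ZM_def W_def bounded_walks_def by (auto simp: length_Suc_conv)
    then show ?thesis using True by (simp add: confined_total_def)
  next
    case False
    then have "Z0 \<inter> ZM = {xs \<in> bounded_walks (M - 1) (Suc m). 0 \<notin> set xs}"
      using bounded_walks_avoiding_top[OF M] unfolding Z0_def ZM_def W_def by auto
    also have "\<dots> = map Suc ` bounded_walks (M - 2) (Suc m)"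
      using bounded_walks_avoiding_bottom[of "M - 1"] False M by (simp add: numeral_2_eq_2)
    finally show ?thesis
      using card_bounded_walks[of m "M - 2"] card_image[of "map Suc" "bounded_walks (M - 2) (Suc m)"]
        False M m by (simp add: inj_on_def of_nat_diff)
  qed
  ultimately have "int (card (spanning_walks M (Suc m)))
      = confined_total m (int M) - 2 * confined_total m (int M - 1) + confined_total m (int M - 2)"
    using card_bounded_walks[of m M] card_bounded_walks[of m "M - 1"] M m
    unfolding W_def by (simp add: of_nat_diff)
  then show ?thesis using confined_total_second_diff[of "int M" m] M m by simp
qed

definition reflect_walk :: "nat \<Rightarrow> nat list \<Rightarrow> nat list" where
  "reflect_walk M xs = map (\<lambda>x. M - x) xs"

lemma reflect_spanning_walk:
  assumes "xs \<in> spanning_walks M n"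
  shows "reflect_walk M xs \<in> spanning_walks M n"
proof -
  have "M - 0 \<in> set (reflect_walk M xs)" "M - M \<in> set (reflect_walk M xs)"
    using assms unfolding spanning_walks_def reflect_walk_def by (simp_all only: set_map) blast+
  then show ?thesis
    using assms unfolding spanning_walks_def bounded_walks_def reflect_walk_def
    by (auto intro!: walk_map)
qed

lemma reflect_walk_involution: "set xs \<subseteq> {..M} \<Longrightarrow> reflect_walk M (reflect_walk M xs) = xs"
  unfolding reflect_walk_def by (auto intro!: map_idI)

text \<open>Spanning walks whose first step goes up; reflection swaps them with the others.\<close>
definition up_spanning_walks :: "nat \<Rightarrow> nat \<Rightarrow> nat list set" where
  "up_spanning_walks M n = {xs \<in> spanning_walks M n. xs ! 1 = Suc (xs ! 0)}"

lemma reflect_walk_first_step: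
  assumes xs: "xs \<in> spanning_walks M n" and n: "2 \<le> n"
  shows "reflect_walk M xs \<in> up_spanning_walks M n \<longleftrightarrow> xs \<notin> up_spanning_walks M n"
proof -
  have len: "Suc 0 < length xs" and walk: "successively adjacent xs" and bounded: "set xs \<subseteq> {..M}"
    using xs n unfolding spanning_walks_def bounded_walks_def by auto
  have len0: "0 < length xs" using len by linarith
  have "xs ! 0 \<in> set xs" "xs ! 1 \<in> set xs" using len0 len by simp_all
  then have "xs ! 0 \<le> M" "xs ! 1 \<le> M" using bounded by auto
  moreover have step: "adjacent (xs ! 0) (xs ! 1)" using successively_nth[OF walk len] by simp
  moreover have "reflect_walk M xs ! 0 = M - xs ! 0" "reflect_walk M xs ! 1 = M - xs ! 1"
    using len0 len unfolding reflect_walk_def by simp_all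
  ultimately have "reflect_walk M xs ! 1 = Suc (reflect_walk M xs ! 0) \<longleftrightarrow> xs ! 1 \<noteq> Suc (xs ! 0)"
    by (elim disjE) simp_all
  then show ?thesis
    using reflect_spanning_walk[OF xs] xs unfolding up_spanning_walks_def by blast
qed

lemma card_spanning_walks_halves:
  assumes n: "2 \<le> n"
  shows "card (spanning_walks M n) = 2 * card (up_spanning_walks M n)"
proof -
  define down where "down = spanning_walks M n - up_spanning_walks M n"
  have bounded: "set xs \<subseteq> {..M}" if "xs \<in> spanning_walks M n" for xs
    using that unfolding spanning_walks_def bounded_walks_def by auto
  have "bij_betw (reflect_walk M) down (up_spanning_walks M n)"
  proof (rule bij_betw_byWitness[where f' = "reflect_walk M"])
    show "\<forall>xs\<in>down. reflect_walk M (reflect_walk M xs) = xs"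
      "\<forall>xs\<in>up_spanning_walks M n. reflect_walk M (reflect_walk M xs) = xs"
      using bounded reflect_walk_involution unfolding down_def up_spanning_walks_def by auto
    show "reflect_walk M ` down \<subseteq> up_spanning_walks M n"
      using reflect_walk_first_step[OF _ n] unfolding down_def by auto
    show "reflect_walk M ` up_spanning_walks M n \<subseteq> down"
    proof
      fix ys assume "ys \<in> reflect_walk M ` up_spanning_walks M n"
      then obtain xs where xs: "xs \<in> up_spanning_walks M n" "ys = reflect_walk M xs" by blast
      then have "xs \<in> spanning_walks M n" unfolding up_spanning_walks_def by simp
      with xs show "ys \<in> down"
        using reflect_walk_first_step[OF _ n] reflect_spanning_walk unfolding down_def by blast
    qed
  qed
  then have "card down = card (up_spanning_walks M n)" by (rule bij_betw_same_card)
  moreover have "finite (spanning_walks M n)"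
    unfolding spanning_walks_def using finite_bounded_walks by auto
  ultimately show ?thesis
    unfolding down_def using card_Diff_subset[of "up_spanning_walks M n" "spanning_walks M n"]
      card_mono[of "spanning_walks M n" "up_spanning_walks M n"]
    by (auto simp: up_spanning_walks_def finite_subset)
qed

corollary card_up_spanning_walks:
  assumes "1 \<le> M" "int m < 2 * int M" "1 \<le> m"
  shows "int (card (up_spanning_walks M (Suc m))) = hit_count m (int M) - hit_count m (int M + 2)"
  using card_spanning_walks[OF assms(1,2)] card_spanning_walks_halves[of "Suc m" M] assms(3)
  by simp

section \<open>Walks determined by their equality pattern\<close>

lemma walk_values_interval:
  "successively adjacent xs \<Longrightarrow> xs \<noteq> [] \<Longrightarrow> \<exists>lo hi. set xs = {lo..hi}"
proof (induction xs rule: induct_list012)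
  case (2 x)
  then show ?case by (metis atLeastAtMost_singleton list.set(1) list.set(2))
next
  case (3 x y zs)
  then obtain lo hi where IH: "set (y # zs) = {lo..hi}" by auto
  then have "y \<in> {lo..hi}" by auto
  with 3 have "set (x # y # zs) = {min x lo..max x hi}"
    by (simp only: list.set(2)[of x] IH) (auto simp: min_def max_def)
  then show ?case by blast
qed simp

lemma spanning_walk_values: "xs \<in> spanning_walks M n \<Longrightarrow> set xs = {0..M}"
  using walk_values_interval[of xs]
  unfolding spanning_walks_def bounded_walks_def by fastforce

text \<open>Two upward spanning walks with the same equality pattern coincide: the pattern
  decides at each step whether the walk turns back, the first step is up, and the
  minimum \<open>0\<close> fixes the starting height.\<close>
lemma up_spanning_walks_pattern_inj:
  assumes xs: "xs \<in> up_spanning_walks M n" and ys: "ys \<in> up_spanning_walks M n"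
    and pattern: "\<And>p q. p < n \<Longrightarrow> q < n \<Longrightarrow> xs ! p = xs ! q \<longleftrightarrow> ys ! p = ys ! q"
  shows "xs = ys"
proof -
  have len: "length xs = n" "length ys = n" and zero: "0 \<in> set xs" "0 \<in> set ys"
    and walk: "successively adjacent xs" "successively adjacent ys"
    and up: "xs ! 1 = Suc (xs ! 0)" "ys ! 1 = Suc (ys ! 0)"
    using xs ys unfolding up_spanning_walks_def spanning_walks_def bounded_walks_def by auto
  have same_step: "int (xs ! Suc i) - int (xs ! i) = int (ys ! Suc i) - int (ys ! i)"
    if "Suc i < n" for i
    using that
  proof (induction i)
    case 0
    then show ?case using up by simp
  next
    case (Suc i)
    have "adjacent (xs ! i) (xs ! Suc i)" "adjacent (xs ! Suc i) (xs ! Suc (Suc i))"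
      "adjacent (ys ! Suc i) (ys ! Suc (Suc i))"
      using successively_nth[OF walk(1), of i] successively_nth[OF walk(1), of "Suc i"]
        successively_nth[OF walk(2), of "Suc i"] Suc.prems len by simp_all
    moreover have turn: "xs ! i = xs ! Suc (Suc i) \<longleftrightarrow> ys ! i = ys ! Suc (Suc i)"
      using pattern Suc.prems by simp
    moreover have "int (xs ! Suc i) - int (xs ! i) = int (ys ! Suc i) - int (ys ! i)"
      using Suc by simp
    ultimately show ?case by (cases "xs ! i = xs ! Suc (Suc i)") auto
  qed
  have same_offset: "int (xs ! i) - int (xs ! 0) = int (ys ! i) - int (ys ! 0)" if "i < n" for i
    using that
  proof (induction i)
    case (Suc i)
    then show ?case using same_step[of i] by simp
  qed simp
  obtain p q where "p < n" "xs ! p = 0" "q < n" "ys ! q = 0"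
    using zero len by (metis in_set_conv_nth)
  then have "xs ! 0 = ys ! 0" using same_offset[of p] same_offset[of q] by simp
  then show ?thesis using same_offset len by (intro nth_equalityI) auto
qed

lemma walk_shift_to_spanning:
  assumes walk: "successively adjacent L" and distinct_values: "card (set L) = Suc M"
    and nonempty: "L \<noteq> []"
  shows "\<exists>L0\<in>spanning_walks M (length L). \<forall>p<length L. \<forall>q<length L.
           L0 ! p = L0 ! q \<longleftrightarrow> L ! p = L ! q"
proof -
  obtain lo hi where interval: "set L = {lo..hi}"
    using walk_values_interval[OF walk nonempty] by blast
  moreover have "lo \<le> hi" using nonempty interval by (metis atLeastatMost_empty_iff set_empty)
  ultimately have hi: "hi = lo + M" using distinct_values by simp
  define L0 where "L0 = map (\<lambda>x. x - lo) L"
  have pattern: "\<forall>p<length L. \<forall>q<length L. L0 ! p = L0 ! q \<longleftrightarrow> L ! p = L ! q"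
  proof (intro allI impI)
    fix p q assume pq: "p < length L" "q < length L"
    then have "L ! p \<ge> lo" "L ! q \<ge> lo" using nth_mem interval by (metis atLeastAtMost_iff)+
    then show "L0 ! p = L0 ! q \<longleftrightarrow> L ! p = L ! q" unfolding L0_def using pq by auto
  qed
  have "successively adjacent L0"
    unfolding L0_def using interval by (intro walk_map[OF walk]) auto
  moreover have "set L0 = {0..M}"
  proof -
    have "(\<lambda>x. x - lo) ` {lo..lo + M} = {0..M}"
      by (auto simp: image_iff intro!: bexI[where x = "_ + lo"])
    then show ?thesis unfolding L0_def set_map interval hi .
  qed
  ultimately have "L0 \<in> spanning_walks M (length L)"
    unfolding spanning_walks_def bounded_walks_def by (simp add: L0_def)
  with pattern show ?thesis by blast
qed

text \<open>Every walk with \<open>M + 1\<close> distinct values has the equality pattern of an upward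
  spanning walk: shift it into \<open>{0..M}\<close> and reflect if the first step is down.\<close>
lemma walk_normal_form:
  assumes walk: "successively adjacent L" and distinct_values: "card (set L) = Suc M"
    and len: "2 \<le> length L"
  shows "\<exists>xs\<in>up_spanning_walks M (length L). \<forall>p<length L. \<forall>q<length L.
           xs ! p = xs ! q \<longleftrightarrow> L ! p = L ! q"
proof -
  obtain L0 where L0: "L0 \<in> spanning_walks M (length L)"
    and shift_pattern: "\<forall>p<length L. \<forall>q<length L. L0 ! p = L0 ! q \<longleftrightarrow> L ! p = L ! q"
    using walk_shift_to_spanning[OF walk distinct_values] len by fastforce
  show ?thesis
  proof (cases "L0 \<in> up_spanning_walks M (length L)")
    case True
    then show ?thesis using shift_pattern by blast
  next
    case False
    have len_L0: "length L0 = length L" and L0_values: "set L0 \<subseteq> {..M}"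
      using L0 unfolding spanning_walks_def bounded_walks_def by simp_all
    have L0_bounded: "L0 ! p \<le> M" if "p < length L" for p
      using L0_values that len_L0 by (metis atMost_iff nth_mem subsetD)
    have "reflect_walk M L0 ! p = reflect_walk M L0 ! q \<longleftrightarrow> L ! p = L ! q"
      if "p < length L" "q < length L" for p q
    proof -
      have "M - L0 ! p = M - L0 ! q \<longleftrightarrow> L0 ! p = L0 ! q"
        using L0_bounded[of p] L0_bounded[of q] that by auto
      then show ?thesis using that shift_pattern len_L0 unfolding reflect_walk_def by simp
    qed
    moreover have "reflect_walk M L0 \<in> up_spanning_walks M (length L)"
      using reflect_walk_first_step[OF L0 len] False by simp
    ultimately show ?thesis by blast
  qed
qed

section \<open>Partitions induced by endomorphisms of a path\<close>

lemma induced_partition_eq_image: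
  "induced_partition n f = (\<lambda>j. {i \<in> {1..n}. f i = f j}) ` {1..n}"
  unfolding induced_partition_def by auto

lemma induced_partition_cong:
  assumes "\<And>i j. i \<in> {1..n} \<Longrightarrow> j \<in> {1..n} \<Longrightarrow> f i = f j \<longleftrightarrow> g i = g j"
  shows "induced_partition n f = induced_partition n g"
  unfolding induced_partition_eq_image
proof (rule image_cong[OF refl])
  fix j assume "j \<in> {1..n}"
  then show "{i \<in> {1..n}. f i = f j} = {i \<in> {1..n}. g i = g j}" using assms by auto
qed

lemma same_block_iff:
  "i \<in> {1..n} \<Longrightarrow> j \<in> {1..n} \<Longrightarrow> (\<exists>B\<in>induced_partition n f. i \<in> B \<and> j \<in> B) \<longleftrightarrow> f i = f j"
  unfolding induced_partition_eq_image by auto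

lemma card_induced_partition: "card (induced_partition n f) = card (f ` {1..n})"
proof -
  have "induced_partition n f = (\<lambda>y. {i \<in> {1..n}. f i = y}) ` (f ` {1..n})"
    unfolding induced_partition_def by auto
  moreover have "inj_on (\<lambda>y. {i \<in> {1..n}. f i = y}) (f ` {1..n})"
    by (rule inj_onI) blast
  ultimately show ?thesis by (simp add: card_image)
qed

definition walk_endo :: "nat list \<Rightarrow> nat \<Rightarrow> nat" where
  "walk_endo xs i = Suc (xs ! (i - 1))"

lemma walk_endo_image: "length xs = n \<Longrightarrow> walk_endo xs ` {1..n} = Suc ` set xs"
proof (intro equalityI subsetI)
  fix y assume "length xs = n" "y \<in> walk_endo xs ` {1..n}"
  then show "y \<in> Suc ` set xs" unfolding walk_endo_def by auto
next
  fix y assume "length xs = n" "y \<in> Suc ` set xs"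
  then obtain k where "k < n" "y = walk_endo xs (Suc k)"
    unfolding walk_endo_def by (auto simp: in_set_conv_nth)
  then show "y \<in> walk_endo xs ` {1..n}" by force
qed

lemma walk_endo_path_endo:
  assumes xs: "xs \<in> bounded_walks M n" and M: "M < n"
  shows "path_endo n (walk_endo xs)"
  unfolding path_endo_def
proof (intro conjI ballI allI impI)
  fix i assume "i \<in> {1..n}"
  then have "xs ! (i - 1) \<in> set xs" using xs unfolding bounded_walks_def by auto
  then show "walk_endo xs i \<in> {1..n}" using xs M unfolding bounded_walks_def walk_endo_def by auto
next
  fix i assume i: "1 \<le> i \<and> i \<le> n - 1"
  then have "adjacent (xs ! (i - 1)) (xs ! i)"
    using xs successively_nth[of adjacent xs "i - 1"] unfolding bounded_walks_def by auto
  then show "\<bar>int (walk_endo xs i) - int (walk_endo xs (i + 1))\<bar> = 1"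
    unfolding walk_endo_def by auto
qed

lemma endo_values_walk:
  assumes "path_endo n f"
  shows "successively adjacent (map f [1..<Suc n])"
  unfolding successively_conv_nth
proof (intro allI impI)
  fix i assume "Suc i < length (map f [1..<Suc n])"
  then have i: "Suc i < n" by (simp del: upt_Suc)
  then have "\<bar>int (f (Suc i)) - int (f (Suc i + 1))\<bar> = 1"
    using assms unfolding path_endo_def by simp
  then show "adjacent (map f [1..<Suc n] ! i) (map f [1..<Suc n] ! Suc i)"
    using i by (auto simp del: upt_Suc)
qed

definition walk_partition :: "nat \<Rightarrow> nat list \<Rightarrow> nat set set" where
  "walk_partition n xs = induced_partition n (walk_endo xs)"

lemma walk_partition_inj: "inj_on (walk_partition n) (up_spanning_walks M n)"
proof (rule inj_onI)
  fix xs ys assume xs: "xs \<in> up_spanning_walks M n" and ys: "ys \<in> up_spanning_walks M n"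
    and eq: "walk_partition n xs = walk_partition n ys"
  show "xs = ys"
  proof (rule up_spanning_walks_pattern_inj[OF xs ys])
    fix p q assume "p < n" "q < n"
    then have "Suc p \<in> {1..n}" "Suc q \<in> {1..n}" by auto
    then have "walk_endo xs (Suc p) = walk_endo xs (Suc q) \<longleftrightarrow>
        walk_endo ys (Suc p) = walk_endo ys (Suc q)"
      using same_block_iff[of "Suc p" n "Suc q"] eq unfolding walk_partition_def by metis
    then show "xs ! p = xs ! q \<longleftrightarrow> ys ! p = ys ! q" unfolding walk_endo_def by simp
  qed
qed

lemma walk_partition_blocks:
  assumes xs: "xs \<in> up_spanning_walks M n" and M: "M < n"
  shows "walk_partition n xs \<in> C_path n" "card (walk_partition n xs) = Suc M"
proof -
  have spanning: "xs \<in> spanning_walks M n" using xs unfolding up_spanning_walks_def by simp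
  then have "path_endo n (walk_endo xs)"
    using walk_endo_path_endo M unfolding spanning_walks_def by blast
  then show "walk_partition n xs \<in> C_path n" unfolding C_path_def walk_partition_def by auto
  have "length xs = n" using spanning unfolding spanning_walks_def bounded_walks_def by simp
  then have "card (walk_partition n xs) = card (Suc ` set xs)"
    unfolding walk_partition_def card_induced_partition by (simp only: walk_endo_image)
  also have "\<dots> = Suc M" using spanning_walk_values[OF spanning] by (simp add: card_image)
  finally show "card (walk_partition n xs) = Suc M" .
qed

lemma walk_partition_surj:
  assumes n: "2 \<le> n" and \<rho>: "\<rho> \<in> C_path n" "card \<rho> = Suc M"
  shows "\<rho> \<in> walk_partition n ` up_spanning_walks M n"
proof -
  obtain f where f: "path_endo n f" "\<rho> = induced_partition n f"
    using \<rho> unfolding C_path_def by auto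
  define L where "L = map f [1..<Suc n]"
  have L_nth: "L ! i = f (Suc i)" if "i < n" for i
    using that unfolding L_def by (simp del: upt_Suc)
  have "set L = f ` {1..n}" unfolding L_def by auto
  then have "card (set L) = Suc M" using \<rho> f card_induced_partition by simp
  then obtain xs where xs: "xs \<in> up_spanning_walks M n"
      and pattern: "\<forall>p<n. \<forall>q<n. xs ! p = xs ! q \<longleftrightarrow> L ! p = L ! q"
    using walk_normal_form[of L M] endo_values_walk[OF f(1)] n unfolding L_def by auto
  have "walk_partition n xs = \<rho>" unfolding walk_partition_def f(2)
  proof (rule induced_partition_cong)
    fix i j assume "i \<in> {1..n}" "j \<in> {1..n}"
    then have "xs ! (i - 1) = xs ! (j - 1) \<longleftrightarrow> L ! (i - 1) = L ! (j - 1)"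
      "L ! (i - 1) = f i" "L ! (j - 1) = f j"
      using pattern L_nth[of "i - 1"] L_nth[of "j - 1"] by auto
    then show "walk_endo xs i = walk_endo xs j \<longleftrightarrow> f i = f j" unfolding walk_endo_def by simp
  qed
  then show ?thesis using xs by blast
qed

theorem card_partitions_with_blocks:
  assumes "2 \<le> n" "M < n"
  shows "card {\<rho> \<in> C_path n. card \<rho> = Suc M} = card (up_spanning_walks M n)"
proof -
  have "{\<rho> \<in> C_path n. card \<rho> = Suc M} = walk_partition n ` up_spanning_walks M n"
    using walk_partition_blocks[OF _ assms(2)] walk_partition_surj[OF assms(1)] by blast
  then show ?thesis using card_image[OF walk_partition_inj] by simp
qed

section \<open>The number of partitions with \<open>n - k + 1\<close> blocks\<close>

text \<open>With \<open>M + k = m + 1\<close>, the two differences making up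
  \<open>hit_count m M - hit_count m (M + 2)\<close> are the two binomial coefficients of the claim.\<close>
lemma hit_count_gap_two:
  assumes "1 \<le> k" "M + k = Suc m"
  shows "hit_count m (int M) - hit_count m (int M + 2)
       = int (zbinom m (int ((k + 1) div 2) - 1)) + int (zbinom m (int (k div 2) - 1))"
proof -
  have "m - M = k - 1" "m - Suc M = k - 2" "nat (int M + 1) = Suc M" using assms by auto
  then have diffs: "hit_count m (int M) - hit_count m (int M + 1) = int (m choose ((k - 1) div 2))"
    "hit_count m (int M + 1) - hit_count m (int M + 2)
      = (if 2 \<le> k then int (m choose ((k - 2) div 2)) else 0)"
    using hit_count_diff[of "int M" m] hit_count_diff[of "int M + 1" m] assms
    by (simp_all add: nat_div_distrib nat_diff_distrib add.assoc)
  have ceil_index: "int ((k + 1) div 2) - 1 = int ((k - 1) div 2)" using assms by linarith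
  have floor_index: "int (k div 2) - 1 = (if 2 \<le> k then int ((k - 2) div 2) else -1)"
  proof (cases "2 \<le> k")
    case True
    then obtain j where "k = j + 2" by (metis le_add_diff_inverse2)
    then show ?thesis by simp
  next
    case False
    with assms have "k = 1" by simp
    then show ?thesis by simp
  qed
  have "hit_count m (int M) - hit_count m (int M + 2)
      = (hit_count m (int M) - hit_count m (int M + 1))
        + (hit_count m (int M + 1) - hit_count m (int M + 2))" by simp
  also have "\<dots> = int (m choose ((k - 1) div 2))
      + (if 2 \<le> k then int (m choose ((k - 2) div 2)) else 0)" unfolding diffs ..
  also have "\<dots> = int (zbinom m (int ((k + 1) div 2) - 1)) + int (zbinom m (int (k div 2) - 1))"
    unfolding ceil_index floor_index zbinom_def by simp
  finally show ?thesis .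
qed

lemma floor_half: "\<lfloor>real k / 2\<rfloor> = int (k div 2)"
  using floor_divide_of_nat_eq[of k 2] by simp

lemma ceiling_half: "\<lceil>real k / 2\<rceil> = int ((k + 1) div 2)"
proof (rule ceiling_unique)
  have "real k \<le> 2 * real ((k + 1) div 2)" "2 * real ((k + 1) div 2) < real k + 2"
    by linarith+
  then show "real_of_int (int ((k + 1) div 2)) - 1 < real k / 2"
    "real k / 2 \<le> real_of_int (int ((k + 1) div 2))" by simp_all
qed

theorem theorem3:
  fixes k n :: nat
  assumes "k \<ge> 1" and "n \<ge> 2 * k"
  shows "l_count k n = zbinom (n - 1) (\<lceil>real k / 2\<rceil> - 1) + zbinom (n - 1) (\<lfloor>real k / 2\<rfloor> - 1)"
proof -
  define M where "M = n - k"
  define m where "m = n - 1"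
  have n: "n = Suc m" "M + k = Suc m" and M: "1 \<le> M" "M < n" and m: "int m < 2 * int M" "1 \<le> m"
    using assms unfolding M_def m_def by auto
  have "l_count k n = card {\<rho> \<in> C_path n. card \<rho> = Suc M}"
    unfolding l_count_def M_def by simp
  also have "\<dots> = card (up_spanning_walks M n)"
    using card_partitions_with_blocks[OF _ M(2)] m n by simp
  finally have "int (l_count k n) = hit_count m (int M) - hit_count m (int M + 2)"
    using card_up_spanning_walks[OF M(1) m] n by simp
  then show ?thesis
    using hit_count_gap_two[OF assms(1) n(2)] unfolding ceiling_half floor_half m_def by simp
qed

end
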